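(* Let $V\in L^\infty(\mathbb{R})$ be real-valued with $\operatorname{supp}V\subset(-b,b)$ for some $b>0$ and $\int_{\mathbb{R}}V\,dx=0$, and let $g\in W_{2,\mathrm{loc}}^2(\mathbb{R})$. For $\alpha>0$ set $V_\alpha(x)=\alpha V(\alpha x)$. Then $$\alpha\int_{\mathbb{R}}V_\alpha g\,dx=g'(0)\int_{\mathbb{R}}xV(x)\,dx+o(\alpha^{-1/2})\quad\text{as }\alpha\to\infty.$$ *)

theory Defs
  imports "HOL-Analysis.Analysis" "HOL-Library.Landau_Symbols"
begin

definition test_function :: "(real \<Rightarrow> real) \<Rightarrow> bool" where
  "test_function \<phi> \<longleftrightarrow>
     (\<forall>k. \<forall>x. (deriv ^^ k) \<phi> differentiable (at x)) \<and>
     (\<exists>R. \<forall>x. \<bar>x\<bar> > R \<longrightarrow> \<phi> x = 0)"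

definition L2_loc :: "(real \<Rightarrow> real) \<Rightarrow> bool" where
  "L2_loc f \<longleftrightarrow> f \<in> borel_measurable lborel \<and>
     (\<forall>a b. set_integrable lborel {a..b} (\<lambda>x. (f x)\<^sup>2))"

definition weak_deriv :: "(real \<Rightarrow> real) \<Rightarrow> (real \<Rightarrow> real) \<Rightarrow> bool" where
  "weak_deriv f h \<longleftrightarrow>
     (\<forall>a b. set_integrable lborel {a..b} f \<and> set_integrable lborel {a..b} h) \<and>
     (\<forall>\<phi>. test_function \<phi> \<longrightarrow>
        (\<integral>x. f x * deriv \<phi> x \<partial>lborel) = - (\<integral>x. h x * \<phi> x \<partial>lborel))"

definition W22_loc_with :: "(real \<Rightarrow> real) \<Rightarrow> (real \<Rightarrow> real) \<Rightarrow> (real \<Rightarrow> real) \<Rightarrow> bool" where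
  "W22_loc_with g g1 g2 \<longleftrightarrow> L2_loc g \<and> L2_loc g1 \<and> L2_loc g2 \<and>
     weak_deriv g g1 \<and> weak_deriv g1 g2"

definition ess_bounded :: "(real \<Rightarrow> real) \<Rightarrow> bool" where
  "ess_bounded V \<longleftrightarrow> V \<in> borel_measurable lborel \<and> (\<exists>C. AE x in lborel. \<bar>V x\<bar> \<le> C)"

end

theory Submission
  imports Defs "HOL-Computational_Algebra.Polynomial" "HOL-Real_Asymp.Real_Asymp"
begin

text \<open>
  The weak derivatives are first made classical. Test functions built from the bump
  \<open>exp (-1 / (x (1 - x)))\<close> give the du Bois-Reymond lemma, so \<open>g\<close> agrees a.e. with a primitive
  \<open>H\<close> of the continuous \<open>g1\<close>; mollifying shows that \<open>g1 t - g1 s\<close> is the integral of \<open>g2\<close> over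
  \<open>(s, t]\<close>.

  Substituting \<open>y = \<alpha> x\<close> and using \<open>\<integral>V = 0\<close>, the quantity to estimate becomes
  \<open>\<integral> V(y) (\<alpha> (H(y/\<alpha>) - H 0) - y g1(0)) dy\<close>, and by the mean value theorem the bracket is
  \<open>y (g1 \<xi> - g1 0)\<close> with \<open>|\<xi>| \<le> \<delta> = b/\<alpha>\<close>. So the error is at most \<open>b \<integral>|V|\<close> times the integral
  of \<open>|g2|\<close> over \<open>[-\<delta>, \<delta>]\<close>. By AM-GM that local integral is at most \<open>A(\<delta>) / (2 t) + t \<delta>\<close> for
  every \<open>t > 0\<close>, where \<open>A(\<delta>)\<close> is the integral of \<open>g2\<^sup>2\<close> over \<open>[-\<delta>, \<delta>]\<close> and tends to \<open>0\<close>; taking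
  \<open>t\<close> proportional to \<open>1 / sqrt \<delta>\<close> makes it \<open>o(sqrt \<delta>) = o(\<alpha> powr (-1/2))\<close>.
\<close>

section \<open>Smooth functions\<close>

definition smooth :: "(real \<Rightarrow> real) \<Rightarrow> bool" where
  "smooth f \<longleftrightarrow> (\<forall>k x. (deriv ^^ k) f differentiable (at x))"

lemma higher_deriv_eqI:
  assumes "D 0 = f" and "\<And>k x. (D k has_real_derivative D (Suc k) x) (at x)"
  shows "(deriv ^^ k) f = D k"
proof (induction k)
  case 0
  then show ?case using assms(1) by simp
next
  case (Suc k)
  show ?case using assms(2) by (auto simp: Suc fun_eq_iff intro!: DERIV_imp_deriv)
qed

lemma smoothI:
  assumes "D 0 = f" and "\<And>k x. (D k has_real_derivative D (Suc k) x) (at x)"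
  shows "smooth f"
  unfolding smooth_def higher_deriv_eqI[OF assms] using assms(2) real_differentiable_def by blast

lemma smooth_has_real_derivative:
  assumes "smooth f"
  shows "((deriv ^^ k) f has_real_derivative (deriv ^^ Suc k) f x) (at x)"
  using assms unfolding smooth_def by (simp add: DERIV_deriv_iff_real_differentiable)

lemma smooth_imp_continuous_on:
  assumes "smooth f"
  shows "continuous_on UNIV f"
proof -
  have "\<And>x. (f has_real_derivative deriv f x) (at x)"
    using smooth_has_real_derivative[OF assms, of 0] by simp
  then show ?thesis by (meson DERIV_continuous continuous_at_imp_continuous_on)
qed

lemma smooth_deriv_continuous_on:
  assumes "smooth f"
  shows "continuous_on UNIV (deriv f)"
proof -
  have "\<And>x. (deriv f has_real_derivative deriv (deriv f) x) (at x)"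
    using smooth_has_real_derivative[OF assms, of 1] by simp
  then show ?thesis by (meson DERIV_continuous continuous_at_imp_continuous_on)
qed

lemma smooth_affine_comp:
  assumes "smooth f"
  shows "smooth (\<lambda>x. f (p * x + q))"
proof (rule smoothI[where D = "\<lambda>k x. p ^ k * (deriv ^^ k) f (p * x + q)"])
  fix k x
  have "((\<lambda>x. (deriv ^^ k) f (p * x + q)) has_real_derivative
          (deriv ^^ Suc k) f (p * x + q) * p) (at x)"
    by (rule DERIV_chain2[OF smooth_has_real_derivative[OF assms]])
       (auto intro!: derivative_eq_intros)
  then show "((\<lambda>x. p ^ k * (deriv ^^ k) f (p * x + q)) has_real_derivative
               p ^ Suc k * (deriv ^^ Suc k) f (p * x + q)) (at x)"
    by (auto intro!: derivative_eq_intros simp: algebra_simps)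
qed simp

lemma smooth_lincomb:
  assumes "smooth f" "smooth g"
  shows "smooth (\<lambda>x. a * f x + c * g x)"
  by (rule smoothI[where D = "\<lambda>k x. a * (deriv ^^ k) f x + c * (deriv ^^ k) g x"])
     (auto intro!: derivative_eq_intros smooth_has_real_derivative assms)

lemma smooth_cmult:
  assumes "smooth f"
  shows "smooth (\<lambda>x. a * f x)"
  using smooth_lincomb[OF assms assms, of a 0] by simp

lemma smooth_diff:
  assumes "smooth f" "smooth g"
  shows "smooth (\<lambda>x. f x - g x)"
  using smooth_lincomb[OF assms, of 1 "-1"] by simp

lemma smooth_primitive:
  assumes "smooth f" and "\<And>x. (F has_real_derivative f x) (at x)"
  shows "smooth F"
proof (rule smoothI[where D = "\<lambda>k. case k of 0 \<Rightarrow> F | Suc j \<Rightarrow> (deriv ^^ j) f"])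
  fix k x
  show "((case k of 0 \<Rightarrow> F | Suc j \<Rightarrow> (deriv ^^ j) f) has_real_derivative
          (case Suc k of 0 \<Rightarrow> F | Suc j \<Rightarrow> (deriv ^^ j) f) x) (at x)"
    using assms smooth_has_real_derivative[OF assms(1)] by (cases k) simp_all
qed simp


section \<open>A smooth bump function on \<open>(0, 1)\<close>\<close>

definition bump_quad :: "real poly" where
  "bump_quad = [:0, 1, -1:]"

lemma poly_bump_quad [simp]: "poly bump_quad x = x * (1 - x)"
  by (simp add: bump_quad_def algebra_simps)

text \<open>The \<open>k\<close>-th derivative of \<open>exp (-1 / q)\<close>, \<open>q = x (1 - x)\<close>, on \<open>(0, 1)\<close> has the form
  \<open>P\<^sub>k / q ^ (2 k) * exp (-1 / q)\<close>; the recursion for \<open>P\<^sub>k\<close> is the quotient rule.\<close>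
fun bump_numer :: "nat \<Rightarrow> real poly" where
  "bump_numer 0 = 1"
| "bump_numer (Suc k) =
     (pderiv (bump_numer k) * bump_quad - smult (of_nat (2 * k)) (bump_numer k * pderiv bump_quad))
       * bump_quad + bump_numer k * pderiv bump_quad"

definition bump_deriv :: "nat \<Rightarrow> real \<Rightarrow> real" where
  "bump_deriv k x = (if 0 < x \<and> x < 1 then
     poly (bump_numer k) x / (x * (1 - x)) ^ (2 * k) * exp (-1 / (x * (1 - x))) else 0)"

lemma has_real_derivative_poly_div_power_exp:
  fixes P Q :: "real \<Rightarrow> real"
  assumes "(P has_real_derivative p') (at x)" and "(Q has_real_derivative q') (at x)"
    and "Q x \<noteq> 0"
  shows "((\<lambda>x. P x / Q x ^ m * exp (-1 / Q x)) has_real_derivative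
          ((p' * Q x - real m * P x * q') * Q x + P x * q') / Q x ^ (m + 2) * exp (-1 / Q x)) (at x)"
proof -
  have "((\<lambda>x. P x / Q x ^ m * exp (-1 / Q x)) has_real_derivative
          (p' * Q x ^ m - P x * (real m * Q x ^ (m - 1) * q')) / (Q x ^ m * Q x ^ m) * exp (-1 / Q x)
          + P x / Q x ^ m * (exp (-1 / Q x) * (q' / (Q x * Q x)))) (at x)"
    by (rule derivative_eq_intros assms refl | simp add: assms(3))+ (simp add: algebra_simps)
  moreover have "(p' * Q x ^ m - P x * (real m * Q x ^ (m - 1) * q')) / (Q x ^ m * Q x ^ m) * exp (-1 / Q x)
        + P x / Q x ^ m * (exp (-1 / Q x) * (q' / (Q x * Q x)))
      = ((p' * Q x - real m * P x * q') * Q x + P x * q') / Q x ^ (m + 2) * exp (-1 / Q x)"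
    using assms(3) by (cases m) (simp_all add: field_simps power2_eq_square)
  ultimately show ?thesis by simp
qed

lemma bump_deriv_has_derivative_inside:
  assumes "0 < x" "x < 1"
  shows "(bump_deriv k has_real_derivative bump_deriv (Suc k) x) (at x)"
proof -
  have q: "poly bump_quad x \<noteq> 0" using assms by simp
  have "2 * Suc k = 2 * k + 2" by simp
  then have "((\<lambda>x. poly (bump_numer k) x / poly bump_quad x ^ (2 * k) * exp (-1 / poly bump_quad x))
      has_real_derivative poly (bump_numer (Suc k)) x / poly bump_quad x ^ (2 * Suc k)
        * exp (-1 / poly bump_quad x)) (at x)"
    using has_real_derivative_poly_div_power_exp[OF poly_DERIV poly_DERIV q, of "bump_numer k" "2 * k"]
    by (simp add: algebra_simps)
  then have "((\<lambda>x. poly (bump_numer k) x / poly bump_quad x ^ (2 * k) * exp (-1 / poly bump_quad x))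
      has_real_derivative bump_deriv (Suc k) x) (at x)"
    using assms by (simp add: bump_deriv_def)
  then show ?thesis
    by (rule has_field_derivative_transform_within_open[where S = "{0<..<1}"])
       (use assms in \<open>auto simp: bump_deriv_def\<close>)
qed

lemma tendsto_mult_power_exp_neg_zero:
  fixes r c :: "'a \<Rightarrow> real"
  assumes "filterlim r at_top F" and "(c \<longlongrightarrow> l) F"
  shows "((\<lambda>h. c h * (r h ^ N * exp (- r h))) \<longlongrightarrow> 0) F"
proof -
  have "((\<lambda>t::real. t ^ N * exp (- t)) \<longlongrightarrow> 0) at_top"
    using tendsto_power_div_exp_0[of N] by (simp add: exp_minus field_simps)
  from tendsto_mult[OF assms(2) filterlim_compose[OF this assms(1)]] show ?thesis
    by simp
qed

text \<open>At the end points the difference quotients of \<open>bump_deriv k\<close> have the form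
  \<open>c h * r ^ (2 k + 1) * exp (- r)\<close> with \<open>r = 1 / q\<close> tending to infinity.\<close>
lemma bump_deriv_flat_at_0: "((\<lambda>h. bump_deriv k h / h) \<longlongrightarrow> 0) (at_right 0)"
proof (rule Lim_transform_eventually)
  have "filterlim (\<lambda>h::real. 1 / (h * (1 - h))) at_top (at_right 0)"
    by real_asymp
  then show "((\<lambda>h. (poly (bump_numer k) h * (1 - h)) *
               ((1 / (h * (1 - h))) ^ (2 * k + 1) * exp (- (1 / (h * (1 - h)))))) \<longlongrightarrow> 0) (at_right 0)"
    by (rule tendsto_mult_power_exp_neg_zero[where l = "poly (bump_numer k) 0"])
       (auto intro!: tendsto_eq_intros)
  show "\<forall>\<^sub>F h in at_right 0. poly (bump_numer k) h * (1 - h) *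
               ((1 / (h * (1 - h))) ^ (2 * k + 1) * exp (- (1 / (h * (1 - h))))) = bump_deriv k h / h"
    by (rule eventually_mono[OF eventually_at_right_real[of 0 1]]) (auto simp: bump_deriv_def field_simps)
qed

lemma bump_deriv_flat_at_1: "((\<lambda>h. bump_deriv k (1 + h) / h) \<longlongrightarrow> 0) (at_left 0)"
proof (rule Lim_transform_eventually)
  have "filterlim (\<lambda>h::real. 1 / ((1 + h) * (- h))) at_top (at_left 0)"
    by real_asymp
  then show "((\<lambda>h. (- poly (bump_numer k) (1 + h) * (1 + h)) *
               ((1 / ((1 + h) * (- h))) ^ (2 * k + 1) * exp (- (1 / ((1 + h) * (- h)))))) \<longlongrightarrow> 0) (at_left 0)"
    by (rule tendsto_mult_power_exp_neg_zero[where l = "- poly (bump_numer k) 1"])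
       (auto intro!: tendsto_eq_intros)
  show "\<forall>\<^sub>F h in at_left 0. - poly (bump_numer k) (1 + h) * (1 + h) *
               ((1 / ((1 + h) * (- h))) ^ (2 * k + 1) * exp (- (1 / ((1 + h) * (- h))))) =
             bump_deriv k (1 + h) / h"
  proof (rule eventually_mono[OF eventually_at_left_real[of "-1" 0]])
    fix h :: real
    assume "h \<in> {-1<..<0}"
    then have h: "-1 < h" "h < 0" by auto
    define q where "q = (1 + h) * (- h)"
    have q: "q > 0" using h unfolding q_def by (intro mult_pos_pos) auto
    have "bump_deriv k (1 + h) = poly (bump_numer k) (1 + h) * ((1 / q) ^ (2 * k) * exp (- (1 / q)))"
      using h by (simp add: bump_deriv_def q_def power_one_over)
    moreover have "(1 + h) * (1 / q) = - 1 / h"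
      using h q by (simp add: q_def divide_simps)
    moreover have "- poly (bump_numer k) (1 + h) * (1 + h) * ((1 / q) ^ (2 * k + 1) * exp (- (1 / q)))
        = - poly (bump_numer k) (1 + h) * ((1 + h) * (1 / q)) * ((1 / q) ^ (2 * k) * exp (- (1 / q)))"
      by (simp only: power_add power_one_right mult_ac)
    ultimately have "- poly (bump_numer k) (1 + h) * (1 + h) * ((1 / q) ^ (2 * k + 1) * exp (- (1 / q)))
        = bump_deriv k (1 + h) / h"
      by simp
    then show "- poly (bump_numer k) (1 + h) * (1 + h) *
        ((1 / ((1 + h) * (- h))) ^ (2 * k + 1) * exp (- (1 / ((1 + h) * (- h))))) = bump_deriv k (1 + h) / h"
      by (simp add: q_def)
  qed simp
qed

lemma bump_deriv_has_derivative: "(bump_deriv k has_real_derivative bump_deriv (Suc k) x) (at x)"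
proof -
  have outside: "bump_deriv j y = 0" if "y \<le> 0 \<or> 1 \<le> y" for j y
    using that by (auto simp: bump_deriv_def)
  have vanishing_near: "(bump_deriv k has_real_derivative 0) (at x)" if "open S" "x \<in> S"
    and "S \<inter> {0<..<1} = {}" for S
    by (rule has_field_derivative_transform_within_open[OF DERIV_const[of 0] that(1,2)])
       (metis disjoint_iff greaterThanLessThan_iff not_le outside that(3))
  consider "0 < x \<and> x < 1" | "x < 0" | "x > 1" | "x = 0" | "x = 1" by linarith
  then show ?thesis
  proof cases
    case 1
    then show ?thesis by (simp add: bump_deriv_has_derivative_inside)
  next
    case 2
    then show ?thesis using outside[of x] by (auto intro: vanishing_near[of "{..<0}"])
  next
    case 3
    then show ?thesis using outside[of x] by (auto intro: vanishing_near[of "{1<..}"])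
  next
    case 4
    have "((\<lambda>h. bump_deriv k h / h) \<longlongrightarrow> 0) (at_left 0)"
    proof (rule Lim_transform_eventually[OF tendsto_const])
      show "\<forall>\<^sub>F h in at_left 0. 0 = bump_deriv k h / h"
        by (rule eventually_mono[OF eventually_at_left_real[of "-1"]]) (simp_all add: outside)
    qed
    with bump_deriv_flat_at_0 show ?thesis
      using 4 filterlim_split_at by (fastforce simp: DERIV_def outside)
  next
    case 5
    have "((\<lambda>h. bump_deriv k (1 + h) / h) \<longlongrightarrow> 0) (at_right 0)"
    proof (rule Lim_transform_eventually[OF tendsto_const])
      show "\<forall>\<^sub>F h in at_right 0. 0 = bump_deriv k (1 + h) / h"
        by (rule eventually_mono[OF eventually_at_right_real[of 0 1]]) (simp_all add: outside)
    qed
    with bump_deriv_flat_at_1 show ?thesis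
      using 5 filterlim_split_at by (fastforce simp: DERIV_def outside)
  qed
qed

lemma smooth_bump: "smooth (bump_deriv 0)"
  by (rule smoothI[where D = bump_deriv]) (auto intro: bump_deriv_has_derivative)

lemma bump_eq: "bump_deriv 0 x = (if 0 < x \<and> x < 1 then exp (-1 / (x * (1 - x))) else 0)"
  by (simp add: bump_deriv_def)

lemma integral_eq_0_if_vanishing: "(\<And>x. x \<in> S \<Longrightarrow> f x = 0) \<Longrightarrow> integral S f = (0::real)"
  by (metis (mono_tags, lifting) integral_0 integral_cong)

lemma integral_from_has_real_derivative:
  fixes f :: "real \<Rightarrow> real"
  assumes cont: "continuous_on UNIV f" and vanish: "\<And>x. x \<le> A \<Longrightarrow> f x = 0"
  shows "((\<lambda>x. integral {A..x} f) has_real_derivative f t) (at t)"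
proof -
  define L where "L = min A t - 1"
  have int: "f integrable_on {a..b}" for a b
    by (rule integrable_continuous_real) (rule continuous_on_subset[OF cont], simp)
  have shift: "integral {A..x} f = integral {L..x} f" for x
  proof (cases "x < A")
    case True
    then have "integral {L..x} f = 0" by (intro integral_eq_0_if_vanishing) (simp add: vanish)
    with True show ?thesis by simp
  next
    case False
    then have "integral {L..A} f + integral {A..x} f = integral {L..x} f"
      by (intro Henstock_Kurzweil_Integration.integral_combine int) (auto simp: L_def)
    moreover have "integral {L..A} f = 0" by (intro integral_eq_0_if_vanishing) (simp add: vanish)
    ultimately show ?thesis by simp
  qed
  have "((\<lambda>x. integral {L..x} f) has_real_derivative f t) (at t within {L..t+1})"
    by (rule integral_has_real_derivative) (auto simp: L_def intro: continuous_on_subset[OF cont])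
  moreover have "at t within {L..t+1} = at t" by (rule at_within_Icc_at) (auto simp: L_def)
  ultimately show ?thesis unfolding shift by simp
qed

lemma continuous_compact_support_integrable:
  fixes f :: "real \<Rightarrow> real"
  assumes cont: "continuous_on UNIV f" and vanish: "\<And>x. x \<notin> {A..B} \<Longrightarrow> f x = 0"
  shows "integrable lborel f" and "integral\<^sup>L lborel f = integral {A..B} f"
proof -
  have int: "set_integrable lborel {A..B} f"
    by (rule borel_integrable_atLeastAtMost') (rule continuous_on_subset[OF cont], simp)
  have eq: "(\<lambda>x. indicator {A..B} x *\<^sub>R f x) = f"
    using vanish by (auto simp: fun_eq_iff indicator_def)
  show "integrable lborel f" using int unfolding set_integrable_def eq .
  show "integral\<^sup>L lborel f = integral {A..B} f"
    using set_borel_integral_eq_integral(2)[OF int] unfolding set_lebesgue_integral_def eq .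
qed

lemma integrable_mult_continuous_compact_support:
  fixes h k :: "real \<Rightarrow> real"
  assumes h: "h \<in> borel_measurable lborel" "set_integrable lborel {a..b} h"
    and k: "continuous_on UNIV k" "\<And>x. x \<notin> {a..b} \<Longrightarrow> k x = 0"
  shows "integrable lborel (\<lambda>x. h x * k x)"
proof -
  obtain B where B: "B \<ge> 0" "\<And>x. x \<in> {a..b} \<Longrightarrow> \<bar>k x\<bar> \<le> B"
    using continuous_on_compact_bound[OF compact_Icc continuous_on_subset[OF k(1) subset_UNIV]] by auto
  have "integrable lborel (\<lambda>x. norm (indicator {a..b} x *\<^sub>R h x))"
    using h(2) unfolding set_integrable_def by (rule integrable_norm)
  then have "integrable lborel (\<lambda>x. B * (indicator {a..b} x * \<bar>h x\<bar>))"
    by (simp add: abs_mult)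
  then show ?thesis
  proof (rule Bochner_Integration.integrable_bound)
    show "(\<lambda>x. h x * k x) \<in> borel_measurable lborel"
      using h(1) borel_measurable_continuous_onI[OF k(1)] by simp
    show "AE x in lborel. norm (h x * k x) \<le> norm (B * (indicator {a..b} x * \<bar>h x\<bar>))"
    proof (rule AE_I2)
      fix x
      show "norm (h x * k x) \<le> norm (B * (indicator {a..b} x * \<bar>h x\<bar>))"
      proof (cases "x \<in> {a..b}")
        case True
        then have "\<bar>h x\<bar> * \<bar>k x\<bar> \<le> \<bar>h x\<bar> * B" using B(2) by (intro mult_left_mono) auto
        then show ?thesis using True B by (simp add: abs_mult mult.commute)
      qed (simp add: k(2))
    qed
  qed
qed


section \<open>Mollifier and smooth step\<close>

lemma integral_bump_pos: "integral {0..1} (bump_deriv 0) > 0"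
proof -
  have "integral {0..1} (\<lambda>x. 0::real) < integral {0..1} (bump_deriv 0)"
    using integral_less_real[of 0 1 "\<lambda>x. 0" "bump_deriv 0"]
      continuous_on_subset[OF smooth_imp_continuous_on[OF smooth_bump]]
    by (auto simp: bump_eq)
  then show ?thesis by simp
qed

definition mollifier :: "real \<Rightarrow> real" where
  "mollifier x = bump_deriv 0 x / integral {0..1} (bump_deriv 0)"

lemma smooth_mollifier: "smooth mollifier"
  using smooth_cmult[OF smooth_bump, of "1 / integral {0..1} (bump_deriv 0)"]
  by (simp add: mollifier_def[abs_def])

lemma continuous_on_mollifier: "continuous_on UNIV mollifier"
  by (rule smooth_imp_continuous_on[OF smooth_mollifier])

lemma mollifier_nonneg: "mollifier x \<ge> 0"
  using integral_bump_pos by (simp add: mollifier_def bump_eq)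

lemma mollifier_eq_0: "x \<notin> {0<..<1} \<Longrightarrow> mollifier x = 0"
  by (auto simp: mollifier_def bump_eq)

lemma integral_mollifier_01: "integral {0..1} mollifier = 1"
  using integral_bump_pos by (simp add: mollifier_def[abs_def])

lemma integrable_mollifier: "integrable lborel mollifier"
  and integral_mollifier: "integral\<^sup>L lborel mollifier = 1"
proof -
  have "\<And>x. x \<notin> {0..1} \<Longrightarrow> mollifier x = 0" by (rule mollifier_eq_0) auto
  from continuous_compact_support_integrable[OF continuous_on_mollifier this]
  show "integrable lborel mollifier" "integral\<^sup>L lborel mollifier = 1"
    by (simp_all add: integral_mollifier_01)
qed

definition smooth_step :: "real \<Rightarrow> real" where
  "smooth_step x = integral {0..x} mollifier"

lemma smooth_step_has_derivative: "(smooth_step has_real_derivative mollifier t) (at t)"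
  unfolding smooth_step_def[abs_def]
  by (rule integral_from_has_real_derivative[OF continuous_on_mollifier]) (simp add: mollifier_eq_0)

lemma smooth_smooth_step: "smooth smooth_step"
  by (rule smooth_primitive[OF smooth_mollifier smooth_step_has_derivative])

lemma smooth_step_eq_0: "x \<le> 0 \<Longrightarrow> smooth_step x = 0"
  unfolding smooth_step_def by (rule integral_eq_0_if_vanishing) (simp add: mollifier_eq_0)

lemma smooth_step_eq_1:
  assumes "1 \<le> x"
  shows "smooth_step x = 1"
proof -
  have "integral {0..1} mollifier + integral {1..x} mollifier = integral {0..x} mollifier"
    using assms by (intro Henstock_Kurzweil_Integration.integral_combine integrable_continuous_real continuous_on_subset[OF continuous_on_mollifier]) auto
  moreover have "integral {1..x} mollifier = 0"
    by (rule integral_eq_0_if_vanishing) (simp add: mollifier_eq_0)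
  ultimately show ?thesis using integral_mollifier_01 by (simp add: smooth_step_def)
qed

lemma smooth_step_nonneg: "0 \<le> smooth_step x"
  unfolding smooth_step_def
  by (intro integral_nonneg mollifier_nonneg integrable_continuous_real
        continuous_on_subset[OF continuous_on_mollifier]) auto

lemma smooth_step_le_1: "smooth_step x \<le> 1"
proof (cases "x \<le> 1")
  case True
  have "integral {0..x} mollifier \<le> integral {0..1} mollifier"
    using True mollifier_nonneg
    by (intro integral_subset_le integrable_continuous_real continuous_on_subset[OF continuous_on_mollifier]) auto
  then show ?thesis using integral_mollifier_01 by (simp add: smooth_step_def)
qed (simp add: smooth_step_eq_1)


lemma test_functionI:
  assumes "smooth f" and "\<And>x. x \<notin> {A..B} \<Longrightarrow> f x = 0"
  shows "test_function f"
  unfolding test_function_def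
proof
  show "\<forall>k x. (deriv ^^ k) f differentiable at x" using assms(1) smooth_def by blast
  show "\<exists>R. \<forall>x. R < \<bar>x\<bar> \<longrightarrow> f x = 0"
    by (rule exI[of _ "\<bar>A\<bar> + \<bar>B\<bar>"]) (auto intro!: assms(2))
qed

lemma test_function_imp_smooth: "test_function f \<Longrightarrow> smooth f"
  unfolding test_function_def smooth_def by blast

lemma test_function_support:
  assumes "test_function \<psi>"
  obtains R where "R > 0" "\<And>x. R \<le> \<bar>x\<bar> \<Longrightarrow> \<psi> x = 0" "\<And>x. R \<le> \<bar>x\<bar> \<Longrightarrow> deriv \<psi> x = 0"
proof -
  obtain R where R: "\<And>x. \<bar>x\<bar> > R \<Longrightarrow> \<psi> x = 0"
    using assms unfolding test_function_def by blast
  show ?thesis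
  proof (rule that[of "\<bar>R\<bar> + 1"])
    show "\<psi> x = 0" if "\<bar>R\<bar> + 1 \<le> \<bar>x\<bar>" for x
      using that R by simp
    show "deriv \<psi> x = 0" if "\<bar>R\<bar> + 1 \<le> \<bar>x\<bar>" for x
    proof (rule DERIV_imp_deriv)
      have "open {y::real. \<bar>R\<bar> < \<bar>y\<bar>}" by (intro open_Collect_less continuous_intros)
      then show "(\<psi> has_real_derivative 0) (at x)"
        by (rule has_field_derivative_transform_within_open[OF DERIV_const[of 0]])
           (use that R in auto)
    qed
  qed simp
qed

lemma test_function_primitive:
  fixes f :: "real \<Rightarrow> real"
  assumes "smooth f" and vanish: "\<And>x. x \<notin> {A<..<B} \<Longrightarrow> f x = 0"
    and "integral {A..B} f = 0"
  shows "test_function (\<lambda>x. integral {A..x} f)" and "deriv (\<lambda>x. integral {A..x} f) = f"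
proof -
  have cont: "continuous_on UNIV f" by (rule smooth_imp_continuous_on[OF assms(1)])
  have F: "((\<lambda>x. integral {A..x} f) has_real_derivative f t) (at t)" for t
    by (rule integral_from_has_real_derivative[OF cont]) (simp add: vanish)
  then show "deriv (\<lambda>x. integral {A..x} f) = f"
    by (auto simp: fun_eq_iff intro!: DERIV_imp_deriv)
  show "test_function (\<lambda>x. integral {A..x} f)"
  proof (rule test_functionI[OF smooth_primitive[OF assms(1) F], of A "max A B"])
    fix x
    assume x: "x \<notin> {A..max A B}"
    show "integral {A..x} f = 0"
    proof (cases "x < A")
      case False
      with x have x: "max A B < x" by auto
      then have "integral {A..max A B} f + integral {max A B..x} f = integral {A..x} f"
        by (intro Henstock_Kurzweil_Integration.integral_combine integrable_continuous_real
              continuous_on_subset[OF cont]) auto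
      moreover have "integral {A..max A B} f = 0"
        using assms(3) by (cases "A \<le> B") (simp_all add: max_def)
      moreover have "integral {max A B..x} f = 0"
        by (rule integral_eq_0_if_vanishing) (simp add: vanish)
      ultimately show ?thesis by simp
    qed simp
  qed
qed

lemma integral_by_parts_test_function:
  fixes G f \<psi> :: "real \<Rightarrow> real"
  assumes G: "\<And>x. (G has_real_derivative f x) (at x)" and cont: "continuous_on UNIV f"
    and \<psi>: "test_function \<psi>"
  shows "(\<integral>x. G x * deriv \<psi> x \<partial>lborel) = - (\<integral>x. f x * \<psi> x \<partial>lborel)"
proof -
  obtain R where R: "R > 0" "\<And>x. R \<le> \<bar>x\<bar> \<Longrightarrow> \<psi> x = 0" "\<And>x. R \<le> \<bar>x\<bar> \<Longrightarrow> deriv \<psi> x = 0"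
    using test_function_support[OF \<psi>] by metis
  have sm: "smooth \<psi>" by (rule test_function_imp_smooth[OF \<psi>])
  have \<psi>': "(\<psi> has_real_derivative deriv \<psi> x) (at x)" for x
    using smooth_has_real_derivative[OF sm, of 0] by simp
  have Gc: "continuous_on UNIV G"
    by (meson G DERIV_continuous continuous_at_imp_continuous_on)
  have c1: "continuous_on UNIV (\<lambda>x. G x * deriv \<psi> x)"
    by (intro continuous_intros Gc smooth_deriv_continuous_on sm)
  have c2: "continuous_on UNIV (\<lambda>x. f x * \<psi> x)"
    by (intro continuous_intros cont smooth_imp_continuous_on sm)
  have e1: "(\<integral>x. G x * deriv \<psi> x \<partial>lborel) = integral {-R..R} (\<lambda>x. G x * deriv \<psi> x)"
    by (rule continuous_compact_support_integrable(2)[OF c1]) (use R(3) in auto)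
  have e2: "(\<integral>x. f x * \<psi> x \<partial>lborel) = integral {-R..R} (\<lambda>x. f x * \<psi> x)"
    by (rule continuous_compact_support_integrable(2)[OF c2]) (use R(2) in auto)
  have "((\<lambda>x. f x * \<psi> x + G x * deriv \<psi> x) has_integral (G R * \<psi> R - G (-R) * \<psi> (-R))) {-R..R}"
  proof (rule fundamental_theorem_of_calculus)
    fix x
    have "((\<lambda>x. G x * \<psi> x) has_real_derivative f x * \<psi> x + G x * deriv \<psi> x) (at x)"
      using DERIV_mult[OF G \<psi>'] by (simp add: algebra_simps)
    then show "((\<lambda>x. G x * \<psi> x) has_vector_derivative f x * \<psi> x + G x * deriv \<psi> x) (at x within {-R..R})"
      by (simp add: has_real_derivative_iff_has_vector_derivative has_vector_derivative_at_within)
  qed (use R(1) in simp)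
  moreover have "\<psi> R = 0" "\<psi> (-R) = 0" using R(2) by auto
  ultimately have "((\<lambda>x. f x * \<psi> x + G x * deriv \<psi> x) has_integral 0) {-R..R}" by simp
  then have "integral {-R..R} (\<lambda>x. f x * \<psi> x) + integral {-R..R} (\<lambda>x. G x * deriv \<psi> x) = 0"
    using integral_add[of "\<lambda>x. f x * \<psi> x" "{-R..R}" "\<lambda>x. G x * deriv \<psi> x"]
      integrable_continuous_real[OF continuous_on_subset[OF c1]]
      integrable_continuous_real[OF continuous_on_subset[OF c2]]
    by (simp add: integral_unique)
  then show ?thesis using e1 e2 by simp
qed

section \<open>Smooth approximations of point masses and of indicators\<close>

lemma eventually_Suc_mult_ge_1:
  assumes "d > 0"
  shows "eventually (\<lambda>m. 1 \<le> real (Suc m) * d) sequentially"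
proof -
  obtain N :: nat where N: "1 / d < real N" using reals_Archimedean2 by blast
  show ?thesis
  proof (rule eventually_sequentiallyI[of N])
    fix m assume "N \<le> m"
    then have "1 / d < real (Suc m)" using N by linarith
    then show "1 \<le> real (Suc m) * d" using assms by (simp add: field_simps)
  qed
qed

lemma integral_rescaled_mollifier:
  fixes f :: "real \<Rightarrow> real"
  assumes "n > 0"
  shows "(\<integral>x. f x * (n * mollifier (n * (x - a))) \<partial>lborel) = (\<integral>y. f (a + y / n) * mollifier y \<partial>lborel)"
proof -
  have "(\<integral>x. f x * (n * mollifier (n * (x - a))) \<partial>lborel)
      = \<bar>1 / n\<bar> *\<^sub>R (\<integral>y. f (a + 1 / n * y) * (n * mollifier (n * (a + 1 / n * y - a))) \<partial>lborel)"
    by (rule lborel_integral_real_affine) (use assms in simp)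
  also have "(\<lambda>y. f (a + 1 / n * y) * (n * mollifier (n * (a + 1 / n * y - a))))
      = (\<lambda>y. n * (f (a + y / n) * mollifier y))"
    using assms by (simp add: fun_eq_iff)
  finally show ?thesis using assms by simp
qed

lemma tendsto_mollify:
  fixes f :: "real \<Rightarrow> real"
  assumes cont: "continuous_on UNIV f"
  shows "(\<lambda>m. \<integral>x. f x * (real (Suc m) * mollifier (real (Suc m) * (x - a))) \<partial>lborel) \<longlonglongrightarrow> f a"
proof -
  define n where "n m = real (Suc m)" for m
  have n: "n m > 0" for m by (simp add: n_def)
  obtain M where M: "\<And>x. x \<in> {a..a+1} \<Longrightarrow> \<bar>f x\<bar> \<le> M"
    using continuous_on_compact_bound[OF compact_Icc[of a "a + 1"] continuous_on_subset[OF cont subset_UNIV]]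
    by auto
  have [measurable]: "f \<in> borel_measurable borel" "mollifier \<in> borel_measurable borel"
    by (intro borel_measurable_continuous_onI cont continuous_on_mollifier)+
  have "(\<lambda>m. \<integral>y. f (a + y / n m) * mollifier y \<partial>lborel) \<longlonglongrightarrow> (\<integral>y. f a * mollifier y \<partial>lborel)"
  proof (rule integral_dominated_convergence[where w = "\<lambda>y. M * mollifier y"])
    show "integrable lborel (\<lambda>y. M * mollifier y)" using integrable_mollifier by simp
    show "AE y in lborel. (\<lambda>m. f (a + y / n m) * mollifier y) \<longlonglongrightarrow> f a * mollifier y"
    proof (rule AE_I2)
      fix y
      have "(\<lambda>m. a + y / n m) \<longlonglongrightarrow> a + 0"
        using LIMSEQ_Suc[OF lim_const_over_n[of y]] by (intro tendsto_intros) (simp add: n_def)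
      then have "(\<lambda>m. f (a + y / n m)) \<longlonglongrightarrow> f a"
        using continuous_on_tendsto_compose[OF cont] by simp
      then show "(\<lambda>m. f (a + y / n m) * mollifier y) \<longlonglongrightarrow> f a * mollifier y" by (intro tendsto_intros)
    qed
    show "AE y in lborel. norm (f (a + y / n m) * mollifier y) \<le> M * mollifier y" for m
    proof (rule AE_I2)
      fix y
      show "norm (f (a + y / n m) * mollifier y) \<le> M * mollifier y"
      proof (cases "y \<in> {0<..<1}")
        case True
        then have "a + y / n m \<in> {a..a+1}"
          using n[of m] by (auto simp: n_def field_simps)
        then show ?thesis using M mollifier_nonneg[of y] by (simp add: abs_mult mult_right_mono)
      qed (simp add: mollifier_eq_0)
    qed
  qed simp_all
  then show ?thesis using integral_rescaled_mollifier[OF n] integral_mollifier by (simp add: n_def)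
qed

text \<open>\<open>smooth_indicator m c d\<close> rises from \<open>0\<close> to \<open>1\<close> on \<open>[c, c + 1/(m+1)]\<close> and falls back on
  \<open>[d, d + 1/(m+1)]\<close>.\<close>
definition smooth_indicator :: "nat \<Rightarrow> real \<Rightarrow> real \<Rightarrow> real \<Rightarrow> real" where
  "smooth_indicator m c d x = smooth_step (real (Suc m) * (x - c)) - smooth_step (real (Suc m) * (x - d))"

lemma smooth_smooth_indicator: "smooth (smooth_indicator m c d)"
proof -
  have "smooth (\<lambda>x. smooth_step (real (Suc m) * x + - real (Suc m) * e))" for e
    by (rule smooth_affine_comp[OF smooth_smooth_step])
  then show ?thesis
    unfolding smooth_indicator_def[abs_def] by (simp add: smooth_diff algebra_simps)
qed

lemma continuous_on_smooth_indicator: "continuous_on UNIV (smooth_indicator m c d)"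
  by (rule smooth_imp_continuous_on[OF smooth_smooth_indicator])

lemma smooth_indicator_has_derivative:
  "(smooth_indicator m c d has_real_derivative
     real (Suc m) * mollifier (real (Suc m) * (x - c)) - real (Suc m) * mollifier (real (Suc m) * (x - d))) (at x)"
proof -
  have "((\<lambda>x. real (Suc m) * (x - e)) has_real_derivative real (Suc m)) (at x)" for e
    by (auto intro!: derivative_eq_intros)
  from DERIV_chain2[OF smooth_step_has_derivative this]
  have "((\<lambda>x. smooth_step (real (Suc m) * (x - e))) has_real_derivative
          real (Suc m) * mollifier (real (Suc m) * (x - e))) (at x)" for e
    by (simp add: mult.commute)
  then show ?thesis unfolding smooth_indicator_def[abs_def] by (intro DERIV_diff)
qed

lemma smooth_indicator_eq_0:
  assumes "c \<le> d" "x \<notin> {c<..<d+1}"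
  shows "smooth_indicator m c d x = 0"
proof (cases "x \<le> c")
  case True
  with assms have "real (Suc m) * (x - c) \<le> 0" "real (Suc m) * (x - d) \<le> 0"
    by (simp_all add: mult_nonneg_nonpos)
  then show ?thesis by (simp add: smooth_indicator_def smooth_step_eq_0)
next
  case False
  with assms have "1 * 1 \<le> real (Suc m) * (x - c)" "1 * 1 \<le> real (Suc m) * (x - d)"
    by (intro mult_mono; simp)+
  then show ?thesis by (simp add: smooth_indicator_def smooth_step_eq_1)
qed

lemma abs_smooth_indicator_le_1: "\<bar>smooth_indicator m c d x\<bar> \<le> 1"
  unfolding smooth_indicator_def using smooth_step_nonneg smooth_step_le_1
  by (smt (verit))

lemma tendsto_smooth_indicator:
  assumes "c < d"
  shows "(\<lambda>m. smooth_indicator m c d x) \<longlonglongrightarrow> indicator {c<..d} x"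
proof (rule tendsto_eventually)
  consider "x \<le> c" | "c < x" "x \<le> d" | "d < x" by linarith
  then show "eventually (\<lambda>m. smooth_indicator m c d x = indicator {c<..d} x) sequentially"
  proof cases
    case 1
    then show ?thesis using assms by (simp add: smooth_indicator_eq_0)
  next
    case 2
    have "eventually (\<lambda>m. 1 \<le> real (Suc m) * (x - c)) sequentially"
      using 2 by (intro eventually_Suc_mult_ge_1) simp
    then show ?thesis
    proof (rule eventually_mono)
      fix m assume "1 \<le> real (Suc m) * (x - c)"
      moreover have "real (Suc m) * (x - d) \<le> 0" using 2 by (simp add: mult_nonneg_nonpos)
      ultimately show "smooth_indicator m c d x = indicator {c<..d} x"
        using 2 by (simp add: smooth_indicator_def smooth_step_eq_0 smooth_step_eq_1)
    qed
  next
    case 3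
    have "eventually (\<lambda>m. 1 \<le> real (Suc m) * (x - d)) sequentially"
      using 3 by (intro eventually_Suc_mult_ge_1) simp
    then show ?thesis
    proof (rule eventually_mono)
      fix m assume m: "1 \<le> real (Suc m) * (x - d)"
      moreover have "real (Suc m) * (x - d) \<le> real (Suc m) * (x - c)"
        using assms by (intro mult_left_mono) auto
      ultimately have "1 \<le> real (Suc m) * (x - c)" by linarith
      with m show "smooth_indicator m c d x = indicator {c<..d} x"
        using 3 by (simp add: smooth_indicator_def smooth_step_eq_1)
    qed
  qed
qed

lemma tendsto_integral_smooth_indicator:
  fixes h :: "real \<Rightarrow> real"
  assumes h: "h \<in> borel_measurable lborel" "set_integrable lborel {c..d+1} h" and "c < d"
  shows "(\<lambda>m. \<integral>x. h x * smooth_indicator m c d x \<partial>lborel) \<longlonglongrightarrow> (\<integral>x. h x * indicator {c<..d} x \<partial>lborel)"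
proof (rule integral_dominated_convergence[where w = "\<lambda>x. indicator {c..d+1} x * \<bar>h x\<bar>"])
  show "(\<lambda>x. h x * indicator {c<..d} x) \<in> borel_measurable lborel" using h(1) by simp
  show "(\<lambda>x. h x * smooth_indicator m c d x) \<in> borel_measurable lborel" for m
    using h(1) borel_measurable_continuous_onI[OF continuous_on_smooth_indicator] by simp
  have "integrable lborel (\<lambda>x. norm (indicator {c..d+1} x *\<^sub>R h x))"
    using h(2) unfolding set_integrable_def by (rule integrable_norm)
  then show "integrable lborel (\<lambda>x. indicator {c..d+1} x * \<bar>h x\<bar>)"
    by (simp add: abs_mult)
  show "AE x in lborel. (\<lambda>m. h x * smooth_indicator m c d x) \<longlonglongrightarrow> h x * indicator {c<..d} x"
    using \<open>c < d\<close> by (intro AE_I2 tendsto_intros tendsto_smooth_indicator)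
  show "AE x in lborel. norm (h x * smooth_indicator m c d x) \<le> indicator {c..d+1} x * \<bar>h x\<bar>" for m
  proof (rule AE_I2)
    fix x
    show "norm (h x * smooth_indicator m c d x) \<le> indicator {c..d+1} x * \<bar>h x\<bar>"
    proof (cases "x \<in> {c..d+1}")
      case True
      then show ?thesis
        using abs_smooth_indicator_le_1[of m c d x] by (simp add: abs_mult mult_left_le)
    next
      case False
      then have "smooth_indicator m c d x = 0"
        using \<open>c < d\<close> by (intro smooth_indicator_eq_0) auto
      then show ?thesis by simp
    qed
  qed
qed

lemma tendsto_integral_smooth_indicator_length:
  assumes "c < d"
  shows "(\<lambda>m. \<integral>x. smooth_indicator m c d x \<partial>lborel) \<longlonglongrightarrow> d - c"
  using tendsto_integral_smooth_indicator[of "\<lambda>_. 1" c d] assms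
  by (simp add: borel_integrable_atLeastAtMost')

lemma integrable_smooth_indicator:
  assumes "c \<le> d"
  shows "integrable lborel (smooth_indicator m c d)"
proof (rule continuous_compact_support_integrable(1)[OF continuous_on_smooth_indicator])
  show "smooth_indicator m c d x = 0" if "x \<notin> {c..d + 1}" for x
    using that assms by (intro smooth_indicator_eq_0) auto
qed

lemma integrable_mult_smooth_indicator:
  fixes h :: "real \<Rightarrow> real"
  assumes "h \<in> borel_measurable lborel" "\<And>a b. set_integrable lborel {a..b} h" and "c \<le> d"
  shows "integrable lborel (\<lambda>x. h x * smooth_indicator m c d x)"
  by (rule integrable_mult_continuous_compact_support[OF assms(1) assms(2)[of c "d + 1"]
        continuous_on_smooth_indicator])
     (use assms(3) smooth_indicator_eq_0 in auto)


section \<open>Functions with a weak derivative\<close>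

text \<open>Test against \<open>smooth_indicator m a b\<close>: its derivative is the difference of approximate
  point masses at \<open>a\<close> and \<open>b\<close>.\<close>
lemma weak_deriv_fundamental_theorem:
  fixes f h :: "real \<Rightarrow> real"
  assumes weak: "weak_deriv f h" and cont: "continuous_on UNIV f"
    and h: "h \<in> borel_measurable lborel" and "a < b"
  shows "f b - f a = (\<integral>x. indicator {a<..b} x * h x \<partial>lborel)"
proof -
  define n where "n m = real (Suc m)" for m
  define K where "K c m x = f x * (n m * mollifier (n m * (x - c)))" for c m x
  have test: "test_function (smooth_indicator m a b)" for m
    by (rule test_functionI[OF smooth_smooth_indicator, where A = a and B = "b + 1"])
       (use \<open>a < b\<close> smooth_indicator_eq_0 in auto)
  have "deriv (smooth_indicator m a b) x = n m * mollifier (n m * (x - a)) - n m * mollifier (n m * (x - b))" for m x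
    using smooth_indicator_has_derivative by (auto simp: n_def intro!: DERIV_imp_deriv)
  then have deriv_eq: "(\<lambda>x. f x * deriv (smooth_indicator m a b) x) = (\<lambda>x. K a m x - K b m x)" for m
    by (simp add: K_def fun_eq_iff right_diff_distrib)
  have K_int: "integrable lborel (K c m)" for c m
  proof (rule continuous_compact_support_integrable(1)[of _ c "c + 1"])
    show "continuous_on UNIV (K c m)"
      unfolding K_def by (intro continuous_intros cont continuous_on_compose2[OF continuous_on_mollifier]) auto
    fix x assume x: "x \<notin> {c..c+1}"
    have "n m * (x - c) \<notin> {0<..<1}"
    proof
      assume in01: "n m * (x - c) \<in> {0<..<1}"
      then have "0 < x - c" by (simp add: n_def zero_less_mult_iff)
      then have "x - c \<le> n m * (x - c)" by (simp add: n_def mult_le_cancel_right1)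
      with in01 \<open>0 < x - c\<close> x show False by auto
    qed
    then show "K c m x = 0" by (simp add: K_def mollifier_eq_0)
  qed
  have "(\<lambda>m. integral\<^sup>L lborel (K c m)) \<longlonglongrightarrow> f c" for c
    using tendsto_mollify[OF cont] by (simp add: K_def[abs_def] n_def)
  then have "(\<lambda>m. \<integral>x. f x * deriv (smooth_indicator m a b) x \<partial>lborel) \<longlonglongrightarrow> f a - f b"
    unfolding deriv_eq using K_int by (simp add: tendsto_diff)
  moreover have "(\<lambda>m. \<integral>x. f x * deriv (smooth_indicator m a b) x \<partial>lborel)
      \<longlonglongrightarrow> - (\<integral>x. h x * indicator {a<..b} x \<partial>lborel)"
    using weak test tendsto_minus[OF tendsto_integral_smooth_indicator[OF h _ \<open>a < b\<close>]]
    unfolding weak_deriv_def by simp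
  ultimately have "f a - f b = - (\<integral>x. h x * indicator {a<..b} x \<partial>lborel)"
    by (rule LIMSEQ_unique)
  then show ?thesis by (simp add: mult.commute)
qed

lemma emeasure_density_integrable_nonneg:
  fixes R :: "'a \<Rightarrow> real"
  assumes "integrable M R" "\<And>x. R x \<ge> 0" "A \<in> sets M"
  shows "emeasure (density M (\<lambda>x. ennreal (R x))) A = ennreal (\<integral>x. R x * indicator A x \<partial>M)"
proof -
  have "emeasure (density M (\<lambda>x. ennreal (R x))) A = (\<integral>\<^sup>+x. ennreal (R x * indicator A x) \<partial>M)"
    using assms by (subst emeasure_density) (auto intro!: nn_integral_cong simp: indicator_def)
  also have "\<dots> = ennreal (\<integral>x. R x * indicator A x \<partial>M)"
    using assms integrable_mult_indicator[OF _ assms(1), of A]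
    by (intro nn_integral_eq_integral) (auto simp: mult.commute)
  finally show ?thesis .
qed

lemma AE_zero_if_integrals_greaterThan_zero:
  fixes F :: "real \<Rightarrow> real"
  assumes F: "integrable lborel F" and tails: "\<And>t. (\<integral>x. F x * indicator {t<..} x \<partial>lborel) = 0"
  shows "AE x in lborel. F x = 0"
proof -
  define P where "P x = max 0 (F x)" for x
  define Q where "Q x = max 0 (- F x)" for x
  have P: "integrable lborel P" and Q: "integrable lborel Q"
    unfolding P_def Q_def using F by (auto intro: integrable_max)
  have set_int_PQ: "(\<integral>x. F x * indicator A x \<partial>lborel)
      = (\<integral>x. P x * indicator A x \<partial>lborel) - (\<integral>x. Q x * indicator A x \<partial>lborel)"
    if "A \<in> sets borel" for A
  proof -
    have "(\<lambda>x. F x * indicator A x) = (\<lambda>x. P x * indicator A x - Q x * indicator A x)"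
      by (auto simp: P_def Q_def fun_eq_iff indicator_def)
    then show ?thesis
      using integrable_mult_indicator[OF _ P, of A] integrable_mult_indicator[OF _ Q, of A] that
      by (simp add: mult.commute)
  qed
  have densities_eq: "density lborel (\<lambda>x. ennreal (P x)) = density lborel (\<lambda>x. ennreal (Q x))"
  proof (rule measure_eqI_lessThan)
    show "emeasure (density lborel (\<lambda>x. ennreal (P x))) {t<..} < \<infinity>" for t
      using emeasure_density_integrable_nonneg[OF P, of "{t<..}"] by (simp add: P_def)
    show "emeasure (density lborel (\<lambda>x. ennreal (P x))) {t<..} = emeasure (density lborel (\<lambda>x. ennreal (Q x))) {t<..}" for t
      using emeasure_density_integrable_nonneg[OF P, of "{t<..}"] emeasure_density_integrable_nonneg[OF Q, of "{t<..}"]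
        set_int_PQ[of "{t<..}"] tails[of t] by (simp add: P_def Q_def)
  qed simp_all
  show ?thesis
  proof (rule sigma_finite_measure.density_zero[OF sigma_finite_lborel F])
    fix A :: "real set"
    assume A: "A \<in> sets lborel"
    have "ennreal (\<integral>x. P x * indicator A x \<partial>lborel) = ennreal (\<integral>x. Q x * indicator A x \<partial>lborel)"
      using emeasure_density_integrable_nonneg[OF P _ A] emeasure_density_integrable_nonneg[OF Q _ A]
        densities_eq by (simp add: P_def Q_def)
    moreover have "(\<integral>x. P x * indicator A x \<partial>lborel) \<ge> 0" "(\<integral>x. Q x * indicator A x \<partial>lborel) \<ge> 0"
      by (auto simp: P_def Q_def intro!: integral_nonneg_AE)
    ultimately show "set_lebesgue_integral lborel A F = 0"
      using set_int_PQ A by (simp add: set_lebesgue_integral_def mult.commute)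
  qed
qed

lemma AE_zero_if_interval_integrals_zero:
  fixes F :: "real \<Rightarrow> real"
  assumes F: "F \<in> borel_measurable lborel" "\<And>a b. set_integrable lborel {a..b} F"
    and intervals: "\<And>u v. u < v \<Longrightarrow> (\<integral>x. indicator {u<..v} x * F x \<partial>lborel) = 0"
  shows "AE x in lborel. F x = 0"
proof -
  have "AE x in lborel. indicator {- real N<..real N} x * F x = 0" for N :: nat
  proof (rule AE_zero_if_integrals_greaterThan_zero)
    have "set_integrable lborel {- real N<..real N} F"
      by (rule set_integrable_subset[OF F(2)[of "- real N" "real N"]]) auto
    then show "integrable lborel (\<lambda>x. indicator {- real N<..real N} x * F x)"
      by (simp add: set_integrable_def)
    show "(\<integral>x. indicator {- real N<..real N} x * F x * indicator {t<..} x \<partial>lborel) = 0" for t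
    proof (cases "max t (- real N) < real N")
      case True
      have "(\<lambda>x. indicator {- real N<..real N} x * F x * indicator {t<..} x)
          = (\<lambda>x. indicator {max t (- real N)<..real N} x * F x)"
        by (auto simp: fun_eq_iff indicator_def)
      then show ?thesis using intervals[OF True] by simp
    next
      case False
      then have "(\<lambda>x. indicator {- real N<..real N} x * F x * indicator {t<..} x) = (\<lambda>x. 0)"
        by (auto simp: fun_eq_iff indicator_def)
      then show ?thesis by simp
    qed
  qed
  then have "AE x in lborel. \<forall>N::nat. indicator {- real N<..real N} x * F x = 0"
    unfolding AE_all_countable by blast
  then show ?thesis
  proof (rule AE_mp[OF _ AE_I2], intro impI)
    fix x assume all: "\<forall>N::nat. indicator {- real N<..real N} x * F x = 0"
    obtain N :: nat where "\<bar>x\<bar> < real N" using reals_Archimedean2 by blast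
    then have "indicator {- real N<..real N} x = (1::real)" by (auto simp: indicator_def)
    then show "F x = 0" using all[rule_format, of N] by simp
  qed
qed

lemma integral_mult_zero_mean_smooth_eq_0:
  fixes D \<kappa> :: "real \<Rightarrow> real"
  assumes orth: "\<And>\<psi>. test_function \<psi> \<Longrightarrow> (\<integral>x. D x * deriv \<psi> x \<partial>lborel) = 0"
    and \<kappa>: "smooth \<kappa>" "\<And>x. x \<notin> {A<..<B} \<Longrightarrow> \<kappa> x = 0" "(\<integral>x. \<kappa> x \<partial>lborel) = 0"
  shows "(\<integral>x. D x * \<kappa> x \<partial>lborel) = 0"
proof -
  have "integral {A..B} \<kappa> = (\<integral>x. \<kappa> x \<partial>lborel)"
  proof (rule continuous_compact_support_integrable(2)[OF smooth_imp_continuous_on[OF \<kappa>(1)], symmetric])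
    show "\<kappa> x = 0" if "x \<notin> {A..B}" for x
      using that by (intro \<kappa>(2)) auto
  qed
  then have "test_function (\<lambda>x. integral {A..x} \<kappa>)" "deriv (\<lambda>x. integral {A..x} \<kappa>) = \<kappa>"
    using test_function_primitive[OF \<kappa>(1,2)] \<kappa>(3) by simp_all
  then show ?thesis using orth by metis
qed

text \<open>A combination of the smooth indicators of \<open>(u, v]\<close> and \<open>(0, 1]\<close> with integral zero is
  orthogonal to \<open>D\<close>; in the limit the means of \<open>D\<close> over the two intervals agree.\<close>
lemma du_Bois_Reymond_interval_integrals:
  fixes D :: "real \<Rightarrow> real"
  assumes D: "D \<in> borel_measurable lborel" "\<And>a b. set_integrable lborel {a..b} D"
    and orth: "\<And>\<psi>. test_function \<psi> \<Longrightarrow> (\<integral>x. D x * deriv \<psi> x \<partial>lborel) = 0"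
    and "u < v"
  shows "(\<integral>x. D x * indicator {u<..v} x \<partial>lborel) = (v - u) * (\<integral>x. D x * indicator {0<..1} x \<partial>lborel)"
proof -
  define I where "I m c d = (\<integral>x. smooth_indicator m c d x \<partial>lborel)" for m c d
  define ratio where "ratio m = I m u v / I m 0 1" for m
  define \<kappa> where "\<kappa> m x = smooth_indicator m u v x - ratio m * smooth_indicator m 0 1 x" for m x
  have "(\<lambda>m. I m 0 1) \<longlonglongrightarrow> 1"
    using tendsto_integral_smooth_indicator_length[of 0 1] by (simp add: I_def)
  then have "eventually (\<lambda>m. I m 0 1 \<noteq> 0) sequentially"
    by (rule tendsto_imp_eventually_ne) simp
  then have "eventually (\<lambda>m. (\<integral>x. D x * \<kappa> m x \<partial>lborel) = 0) sequentially"
  proof (rule eventually_mono)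
    fix m assume "I m 0 1 \<noteq> 0"
    show "(\<integral>x. D x * \<kappa> m x \<partial>lborel) = 0"
    proof (rule integral_mult_zero_mean_smooth_eq_0[OF orth])
      have "smooth (\<lambda>x. 1 * smooth_indicator m u v x + (- ratio m) * smooth_indicator m 0 1 x)"
        by (intro smooth_lincomb smooth_smooth_indicator)
      then show "smooth (\<kappa> m)" by (simp add: \<kappa>_def[abs_def])
      show "\<kappa> m x = 0" if "x \<notin> {min u 0 - 1<..<max v 1 + 2}" for x
      proof -
        have "x \<notin> {u<..<v + 1}" "x \<notin> {0<..<1 + 1}" using that by auto
        then show ?thesis using \<open>u < v\<close> by (simp add: \<kappa>_def smooth_indicator_eq_0)
      qed
      show "(\<integral>x. \<kappa> m x \<partial>lborel) = 0"
        using integrable_smooth_indicator[of u v m] integrable_smooth_indicator[of 0 1 m]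
          \<open>u < v\<close> \<open>I m 0 1 \<noteq> 0\<close> by (simp add: \<kappa>_def I_def ratio_def)
    qed
  qed
  then have lim_0: "(\<lambda>m. \<integral>x. D x * \<kappa> m x \<partial>lborel) \<longlonglongrightarrow> 0"
    by (rule tendsto_eventually)
  have "(\<integral>x. D x * \<kappa> m x \<partial>lborel)
      = (\<integral>x. D x * smooth_indicator m u v x \<partial>lborel) - ratio m * (\<integral>x. D x * smooth_indicator m 0 1 x \<partial>lborel)" for m
  proof -
    have "(\<lambda>x. D x * \<kappa> m x) = (\<lambda>x. D x * smooth_indicator m u v x - ratio m * (D x * smooth_indicator m 0 1 x))"
      by (auto simp: \<kappa>_def fun_eq_iff algebra_simps)
    then show ?thesis
      using integrable_mult_smooth_indicator[OF D, of u v m] integrable_mult_smooth_indicator[OF D, of 0 1 m]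
        \<open>u < v\<close> by simp
  qed
  moreover have "(\<lambda>m. ratio m) \<longlonglongrightarrow> (v - u) / (1 - 0)"
    unfolding ratio_def I_def using \<open>u < v\<close>
    by (intro tendsto_divide tendsto_integral_smooth_indicator_length) simp_all
  moreover have "(\<lambda>m. \<integral>x. D x * smooth_indicator m c d x \<partial>lborel) \<longlonglongrightarrow> (\<integral>x. D x * indicator {c<..d} x \<partial>lborel)"
    if "c < d" for c d
    using that D by (intro tendsto_integral_smooth_indicator) simp_all
  ultimately have "(\<lambda>m. \<integral>x. D x * \<kappa> m x \<partial>lborel) \<longlonglongrightarrow>
      (\<integral>x. D x * indicator {u<..v} x \<partial>lborel) - (v - u) * (\<integral>x. D x * indicator {0<..1} x \<partial>lborel)"
    using \<open>u < v\<close> by (simp add: tendsto_diff tendsto_mult)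
  with lim_0 show ?thesis
    using LIMSEQ_unique by fastforce
qed

lemma du_Bois_Reymond:
  fixes D :: "real \<Rightarrow> real"
  assumes D: "D \<in> borel_measurable lborel" "\<And>a b. set_integrable lborel {a..b} D"
    and orth: "\<And>\<psi>. test_function \<psi> \<Longrightarrow> (\<integral>x. D x * deriv \<psi> x \<partial>lborel) = 0"
  obtains c where "AE x in lborel. D x = c"
proof -
  define c where "c = (\<integral>x. D x * indicator {0<..1} x \<partial>lborel)"
  have "AE x in lborel. D x - c = 0"
  proof (rule AE_zero_if_interval_integrals_zero)
    show "(\<lambda>x. D x - c) \<in> borel_measurable lborel" using D(1) by simp
    show "set_integrable lborel {a..b} (\<lambda>x. D x - c)" for a b
      by (intro set_integral_diff(1) D(2) borel_integrable_atLeastAtMost') simp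
    fix u v :: real assume "u < v"
    have "set_integrable lborel {u<..v} D"
      by (rule set_integrable_subset[OF D(2)[of u v]]) auto
    moreover have "(\<lambda>x. indicator {u<..v} x * (D x - c)) = (\<lambda>x. D x * indicator {u<..v} x - c * indicator {u<..v} x)"
      by (auto simp: fun_eq_iff algebra_simps)
    ultimately have "(\<integral>x. indicator {u<..v} x * (D x - c) \<partial>lborel)
        = (\<integral>x. D x * indicator {u<..v} x \<partial>lborel) - (v - u) * c"
      using \<open>u < v\<close> by (simp add: set_integrable_def mult.commute)
    then show "(\<integral>x. indicator {u<..v} x * (D x - c) \<partial>lborel) = 0"
      using du_Bois_Reymond_interval_integrals[OF D orth \<open>u < v\<close>] by (simp add: c_def)
  qed
  then show ?thesis by (intro that[of c]) simp
qed

lemma integrable_mult_deriv_test_function: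
  fixes u \<psi> :: "real \<Rightarrow> real"
  assumes u: "u \<in> borel_measurable lborel" "\<And>a b. set_integrable lborel {a..b} u"
    and \<psi>: "test_function \<psi>"
  shows "integrable lborel (\<lambda>x. u x * deriv \<psi> x)"
proof -
  obtain R where R: "\<And>x. R \<le> \<bar>x\<bar> \<Longrightarrow> deriv \<psi> x = 0"
    using test_function_support[OF \<psi>] by metis
  show ?thesis
  proof (rule integrable_mult_continuous_compact_support[OF u(1) u(2)[of "-\<bar>R\<bar>" "\<bar>R\<bar>"]])
    show "continuous_on UNIV (deriv \<psi>)"
      by (rule smooth_deriv_continuous_on[OF test_function_imp_smooth[OF \<psi>]])
  qed (use R in auto)
qed

lemma weak_deriv_AE_eq_primitive:
  fixes g g' :: "real \<Rightarrow> real"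
  assumes weak: "weak_deriv g g'" and cont: "continuous_on UNIV g'"
    and g: "g \<in> borel_measurable lborel"
  obtains G where "\<And>x. (G has_real_derivative g' x) (at x)" and "AE x in lborel. g x = G x"
proof -
  obtain G0 where G0: "\<And>x. (G0 has_real_derivative g' x) (at x)"
    using einterval_antiderivative[of "-\<infinity>" "\<infinity>" g'] cont
    by (auto simp: has_real_derivative_iff_has_vector_derivative continuous_on_eq_continuous_at)
  have G0_cont: "continuous_on UNIV G0"
    by (meson G0 DERIV_continuous continuous_at_imp_continuous_on)
  have G0_int: "set_integrable lborel {a..b} G0" for a b
    by (intro borel_integrable_atLeastAtMost' continuous_on_subset[OF G0_cont]) simp
  obtain c where c: "AE x in lborel. g x - G0 x = c"
  proof (rule du_Bois_Reymond)
    show "(\<lambda>x. g x - G0 x) \<in> borel_measurable lborel"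
      using g borel_measurable_continuous_onI[OF G0_cont] by simp
    show "set_integrable lborel {a..b} (\<lambda>x. g x - G0 x)" for a b
      using weak G0_int unfolding weak_deriv_def by (intro set_integral_diff(1)) auto
    fix \<psi> assume \<psi>: "test_function \<psi>"
    have "(\<integral>x. (g x - G0 x) * deriv \<psi> x \<partial>lborel)
        = (\<integral>x. g x * deriv \<psi> x \<partial>lborel) - (\<integral>x. G0 x * deriv \<psi> x \<partial>lborel)"
      using weak g G0_int borel_measurable_continuous_onI[OF G0_cont] \<psi>
      by (simp add: left_diff_distrib weak_deriv_def integrable_mult_deriv_test_function)
    also have "\<dots> = 0"
      using weak \<psi> integral_by_parts_test_function[OF G0 cont \<psi>] by (simp add: weak_deriv_def)
    finally show "(\<integral>x. (g x - G0 x) * deriv \<psi> x \<partial>lborel) = 0" .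
  qed
  show ?thesis
  proof (rule that)
    show "((\<lambda>x. G0 x + c) has_real_derivative g' x) (at x)" for x
      using G0 by (auto intro!: derivative_eq_intros)
    show "AE x in lborel. g x = G0 x + c"
      using c by eventually_elim simp
  qed
qed

section \<open>Local integrals near the origin\<close>

lemma tendsto_integral_Icc_at_right_0:
  fixes f :: "real \<Rightarrow> real"
  assumes f: "f \<in> borel_measurable lborel" "set_integrable lborel {-1..1} f"
  shows "((\<lambda>\<delta>. \<integral>x. indicator {-\<delta>..\<delta>} x * f x \<partial>lborel) \<longlongrightarrow> 0) (at_right 0)"
  unfolding filterlim_at_right_to_top
proof (rule integral_dominated_convergence_at_top[where w = "\<lambda>x. indicator {-1..1} x * \<bar>f x\<bar>" and f = "\<lambda>_. 0", simplified])
  show "(\<lambda>x. indicator {- inverse t..inverse t} x * f x) \<in> borel_measurable lborel" for t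
    using f(1) by simp
  have "integrable lborel (\<lambda>x. norm (indicator {-1..1} x *\<^sub>R f x))"
    using f(2) unfolding set_integrable_def by (rule integrable_norm)
  then show "integrable lborel (\<lambda>x. indicator {-1..1} x * \<bar>f x\<bar>)"
    by (simp add: abs_mult)
  show "AE x in lborel. ((\<lambda>t. indicator {- inverse t..inverse t} x * f x) \<longlongrightarrow> 0) at_top"
    using AE_lborel_singleton[of 0]
  proof eventually_elim
    case (elim x)
    have "eventually (\<lambda>t. inverse t < \<bar>x\<bar>) at_top"
      using elim by (intro order_tendstoD(2)[OF tendsto_inverse_0_at_top[OF filterlim_ident]]) simp
    then show ?case
      by (rule tendsto_eventually[OF eventually_mono]) (auto simp: indicator_def)
  qed
  show "\<forall>\<^sub>F t in at_top. AE x in lborel. norm (indicator {- inverse t..inverse t} x * f x) \<le> indicator {-1..1} x * \<bar>f x\<bar>"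
    using eventually_ge_at_top[of 1]
  proof eventually_elim
    case (elim t)
    then have "inverse t \<le> 1" by (simp add: inverse_le_1_iff)
    then show ?case by (intro AE_I2) (auto simp: indicator_def abs_mult)
  qed
qed

lemma integral_Icc_abs_le_AM_GM:
  fixes h :: "real \<Rightarrow> real"
  assumes h: "set_integrable lborel {-\<delta>..\<delta>} h" "set_integrable lborel {-\<delta>..\<delta>} (\<lambda>x. (h x)\<^sup>2)"
    and "t > 0" "\<delta> \<ge> 0"
  shows "(\<integral>x. indicator {-\<delta>..\<delta>} x * \<bar>h x\<bar> \<partial>lborel)
           \<le> (\<integral>x. indicator {-\<delta>..\<delta>} x * (h x)\<^sup>2 \<partial>lborel) / (2 * t) + t * \<delta>"
proof -
  have int_abs: "integrable lborel (\<lambda>x. indicator {-\<delta>..\<delta>} x * \<bar>h x\<bar>)"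
    using integrable_norm[OF h(1)[unfolded set_integrable_def]] by (simp add: abs_mult)
  have int_sq: "integrable lborel (\<lambda>x. indicator {-\<delta>..\<delta>} x * (h x)\<^sup>2)"
    using h(2) by (simp add: set_integrable_def)
  have "\<bar>h x\<bar> \<le> (h x)\<^sup>2 / (2 * t) + t / 2" for x
  proof -
    have "0 \<le> (\<bar>h x\<bar> - t)\<^sup>2" by simp
    then show ?thesis using \<open>t > 0\<close> by (simp add: field_simps power2_eq_square)
  qed
  moreover have "integrable lborel
      (\<lambda>x. indicator {-\<delta>..\<delta>} x * (h x)\<^sup>2 / (2 * t) + indicator {-\<delta>..\<delta>} x * (t / 2))"
  proof (intro Bochner_Integration.integrable_add integrable_divide_zero int_sq)
    have "set_integrable lborel {-\<delta>..\<delta>} (\<lambda>_. t / 2)"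
      by (rule borel_integrable_atLeastAtMost') simp
    then show "integrable lborel (\<lambda>x. indicator {-\<delta>..\<delta>} x * (t / 2))"
      by (simp add: set_integrable_def)
  qed
  ultimately have "(\<integral>x. indicator {-\<delta>..\<delta>} x * \<bar>h x\<bar> \<partial>lborel)
      \<le> (\<integral>x. indicator {-\<delta>..\<delta>} x * (h x)\<^sup>2 / (2 * t) + indicator {-\<delta>..\<delta>} x * (t / 2) \<partial>lborel)"
    using int_abs by (intro integral_mono) (auto simp: indicator_def)
  also have "\<dots> = (\<integral>x. indicator {-\<delta>..\<delta>} x * (h x)\<^sup>2 \<partial>lborel) / (2 * t) + t * \<delta>"
    using int_sq \<open>\<delta> \<ge> 0\<close> by simp
  finally show ?thesis .
qed

lemma integral_Icc_abs_smallo_sqrt: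
  fixes h :: "real \<Rightarrow> real"
  assumes h: "h \<in> borel_measurable lborel" "\<And>a b. set_integrable lborel {a..b} h"
    "\<And>a b. set_integrable lborel {a..b} (\<lambda>x. (h x)\<^sup>2)"
  shows "(\<lambda>\<delta>. \<integral>x. indicator {-\<delta>..\<delta>} x * \<bar>h x\<bar> \<partial>lborel) \<in> o[at_right 0](\<lambda>\<delta>. sqrt \<delta>)"
proof (rule landau_o.smallI)
  fix \<epsilon> :: real
  assume "\<epsilon> > 0"
  have "((\<lambda>\<delta>. \<integral>x. indicator {-\<delta>..\<delta>} x * (h x)\<^sup>2 \<partial>lborel) \<longlongrightarrow> 0) (at_right 0)"
    using h by (intro tendsto_integral_Icc_at_right_0) simp_all
  then have "eventually (\<lambda>\<delta>. (\<integral>x. indicator {-\<delta>..\<delta>} x * (h x)\<^sup>2 \<partial>lborel) < \<epsilon>\<^sup>2 / 2) (at_right 0)"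
    using \<open>\<epsilon> > 0\<close> by (intro order_tendstoD(2)) auto
  moreover have "eventually (\<lambda>\<delta>::real. \<delta> > 0) (at_right 0)"
    by (simp add: eventually_at_right_less)
  ultimately show "eventually (\<lambda>\<delta>. norm (\<integral>x. indicator {-\<delta>..\<delta>} x * \<bar>h x\<bar> \<partial>lborel) \<le> \<epsilon> * norm (sqrt \<delta>)) (at_right 0)"
  proof eventually_elim
    case (elim \<delta>)
    define t where "t = \<epsilon> / (2 * sqrt \<delta>)"
    have "t > 0" using \<open>\<epsilon> > 0\<close> elim(2) by (simp add: t_def)
    have nonneg: "0 \<le> (\<integral>x. indicator {-\<delta>..\<delta>} x * \<bar>h x\<bar> \<partial>lborel)"
      by (intro integral_nonneg_AE) auto
    have "(\<integral>x. indicator {-\<delta>..\<delta>} x * \<bar>h x\<bar> \<partial>lborel)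
        \<le> (\<integral>x. indicator {-\<delta>..\<delta>} x * (h x)\<^sup>2 \<partial>lborel) / (2 * t) + t * \<delta>"
      using h \<open>t > 0\<close> elim(2) by (intro integral_Icc_abs_le_AM_GM) simp_all
    moreover have "(\<integral>x. indicator {-\<delta>..\<delta>} x * (h x)\<^sup>2 \<partial>lborel) / (2 * t) \<le> \<epsilon>\<^sup>2 / 2 / (2 * t)"
      using elim(1) \<open>t > 0\<close> by (intro divide_right_mono) simp_all
    moreover have "\<epsilon>\<^sup>2 / 2 / (2 * t) + t * \<delta> = \<epsilon> * sqrt \<delta>"
      using \<open>\<epsilon> > 0\<close> elim(2) by (simp add: t_def field_simps power2_eq_square)
    ultimately have "(\<integral>x. indicator {-\<delta>..\<delta>} x * \<bar>h x\<bar> \<partial>lborel) \<le> \<epsilon> * sqrt \<delta>"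
      by linarith
    then show ?case using nonneg elim(2) by simp
  qed
qed

lemma increment_le_integral_Icc_abs:
  fixes g1 g2 :: "real \<Rightarrow> real"
  assumes ftc: "\<And>a b. a < b \<Longrightarrow> g1 b - g1 a = (\<integral>x. indicator {a<..b} x * g2 x \<partial>lborel)"
    and g2: "\<And>a b. set_integrable lborel {a..b} g2"
    and "\<bar>s\<bar> \<le> \<delta>"
  shows "\<bar>g1 s - g1 0\<bar> \<le> (\<integral>x. indicator {-\<delta>..\<delta>} x * \<bar>g2 x\<bar> \<partial>lborel)"
proof -
  have Icc: "integrable lborel (\<lambda>x. indicator {-\<delta>..\<delta>} x * \<bar>g2 x\<bar>)"
    using integrable_norm[OF g2[unfolded set_integrable_def]] by (simp add: abs_mult)
  have bound: "\<bar>g1 b - g1 a\<bar> \<le> (\<integral>x. indicator {-\<delta>..\<delta>} x * \<bar>g2 x\<bar> \<partial>lborel)"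
    if "-\<delta> \<le> a" "a < b" "b \<le> \<delta>" for a b
  proof -
    have "set_integrable lborel {a<..b} g2"
      by (rule set_integrable_subset[OF g2[of a b]]) auto
    then have int_ab: "integrable lborel (\<lambda>x. indicator {a<..b} x * g2 x)"
      by (simp add: set_integrable_def)
    have "\<bar>g1 b - g1 a\<bar> \<le> (\<integral>x. \<bar>indicator {a<..b} x * g2 x\<bar> \<partial>lborel)"
      unfolding ftc[OF \<open>a < b\<close>] by (rule integral_abs_bound)
    also have "\<dots> \<le> (\<integral>x. indicator {-\<delta>..\<delta>} x * \<bar>g2 x\<bar> \<partial>lborel)"
      using integrable_abs[OF int_ab] Icc that
      by (intro integral_mono) (auto simp: indicator_def abs_mult)
    finally show ?thesis .
  qed
  consider "0 < s" | "s < 0" | "s = 0" by linarith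
  then show ?thesis
  proof cases
    case 3
    then show ?thesis by (simp add: integral_nonneg_AE)
  qed (use bound[of 0 s] bound[of s 0] \<open>\<bar>s\<bar> \<le> \<delta>\<close> in \<open>auto simp: abs_minus_commute\<close>)
qed


section \<open>Scaled potentials against \<open>C\<^sup>1\<close> functions\<close>

lemma MVT_at_0:
  fixes H H' :: "real \<Rightarrow> real"
  assumes H: "\<And>x. (H has_real_derivative H' x) (at x)"
  shows "\<exists>\<xi>. \<bar>\<xi>\<bar> \<le> \<bar>s\<bar> \<and> H s - H 0 = s * H' \<xi>"
proof -
  consider "0 < s" | "s < 0" | "s = 0" by linarith
  then show ?thesis
  proof cases
    case 1
    then obtain z where "0 < z" "z < s" "H s - H 0 = (s - 0) * H' z" using MVT2[OF 1 H] by blast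
    then show ?thesis by (intro exI[of _ z]) auto
  next
    case 2
    then obtain z where "s < z" "z < 0" "H 0 - H s = (0 - s) * H' z" using MVT2[OF 2 H] by blast
    then show ?thesis by (intro exI[of _ z]) (auto simp: algebra_simps)
  next
    case 3
    then show ?thesis by (intro exI[of _ 0]) simp
  qed
qed

lemma integrable_mult_continuous_if_ess_bounded:
  fixes V K :: "real \<Rightarrow> real"
  assumes V: "ess_bounded V" "AE x in lborel. x \<notin> {-b<..<b} \<longrightarrow> V x = 0"
    and K: "continuous_on UNIV K"
  shows "integrable lborel (\<lambda>y. V y * K y)"
proof -
  obtain C where "V \<in> borel_measurable lborel" and C: "AE x in lborel. \<bar>V x\<bar> \<le> C"
    using V(1) unfolding ess_bounded_def by blast
  obtain M where M: "M \<ge> 0" "\<And>x. x \<in> {-b..b} \<Longrightarrow> \<bar>K x\<bar> \<le> M"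
    using continuous_on_compact_bound[OF compact_Icc continuous_on_subset[OF K subset_UNIV]] by auto
  have "set_integrable lborel {-b..b} (\<lambda>_. \<bar>C\<bar> * M)"
    by (rule borel_integrable_atLeastAtMost') simp
  then have "integrable lborel (\<lambda>y. indicator {-b..b} y * (\<bar>C\<bar> * M))"
    by (simp add: set_integrable_def)
  then show ?thesis
  proof (rule Bochner_Integration.integrable_bound)
    show "(\<lambda>y. V y * K y) \<in> borel_measurable lborel"
      using \<open>V \<in> borel_measurable lborel\<close> borel_measurable_continuous_onI[OF K] by simp
    show "AE x in lborel. norm (V x * K x) \<le> norm (indicator {-b..b} x * (\<bar>C\<bar> * M))"
      using C V(2)
    proof eventually_elim
      case (elim x)
      show ?case
      proof (cases "x \<in> {-b<..<b}")
        case True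
        then have "\<bar>V x\<bar> * \<bar>K x\<bar> \<le> \<bar>C\<bar> * M"
          using elim(1) M(2)[of x] by (intro mult_mono) auto
        with True M(1) show ?thesis by (simp add: abs_mult)
      qed (use elim(2) in simp)
    qed
  qed
qed

lemma integral_scaled_potential:
  fixes V g H :: "real \<Rightarrow> real"
  assumes "\<alpha> > 0" and [measurable]: "V \<in> borel_measurable borel" "H \<in> borel_measurable borel"
    and g: "g \<in> borel_measurable lborel" "AE x in lborel. g x = H x"
  shows "(\<integral>x. (\<alpha> * V (\<alpha> * x)) * g x \<partial>lborel) = (\<integral>y. V y * H (y / \<alpha>) \<partial>lborel)"
proof -
  have "(\<integral>x. (\<alpha> * V (\<alpha> * x)) * g x \<partial>lborel) = (\<integral>x. (\<alpha> * V (\<alpha> * x)) * H x \<partial>lborel)"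
  proof (rule integral_cong_AE)
    have [measurable]: "g \<in> borel_measurable borel" using g(1) by simp
    show "(\<lambda>x. \<alpha> * V (\<alpha> * x) * g x) \<in> borel_measurable lborel" by measurable
    show "(\<lambda>x. \<alpha> * V (\<alpha> * x) * H x) \<in> borel_measurable lborel" by measurable
    show "AE x in lborel. \<alpha> * V (\<alpha> * x) * g x = \<alpha> * V (\<alpha> * x) * H x"
      using g(2) by eventually_elim simp
  qed
  also have "\<dots> = \<bar>1 / \<alpha>\<bar> *\<^sub>R (\<integral>y. (\<alpha> * V (\<alpha> * (0 + 1 / \<alpha> * y))) * H (0 + 1 / \<alpha> * y) \<partial>lborel)"
    by (rule lborel_integral_real_affine) (use \<open>\<alpha> > 0\<close> in simp)
  also have "(\<lambda>y. (\<alpha> * V (\<alpha> * (0 + 1 / \<alpha> * y))) * H (0 + 1 / \<alpha> * y)) = (\<lambda>y. \<alpha> * (V y * H (y / \<alpha>)))"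
    using \<open>\<alpha> > 0\<close> by (simp add: fun_eq_iff)
  finally show ?thesis using \<open>\<alpha> > 0\<close> by simp
qed

lemma scaled_potential_first_moment_eq:
  fixes V g H H' :: "real \<Rightarrow> real"
  assumes V: "ess_bounded V" "AE x in lborel. x \<notin> {-b<..<b} \<longrightarrow> V x = 0" "(\<integral>x. V x \<partial>lborel) = 0"
    and H: "\<And>x. (H has_real_derivative H' x) (at x)"
    and g: "g \<in> borel_measurable lborel" "AE x in lborel. g x = H x"
    and "\<alpha> > 0"
  shows "\<alpha> * (\<integral>x. (\<alpha> * V (\<alpha> * x)) * g x \<partial>lborel) - H' 0 * (\<integral>x. x * V x \<partial>lborel)
           = (\<integral>y. V y * (\<alpha> * (H (y / \<alpha>) - H 0) - y * H' 0) \<partial>lborel)"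
proof -
  have [measurable]: "V \<in> borel_measurable borel"
    using V(1) unfolding ess_bounded_def by simp
  have H_cont: "continuous_on UNIV H"
    by (meson H DERIV_continuous continuous_at_imp_continuous_on)
  have int: "integrable lborel (\<lambda>y. V y * K y)" if "continuous_on UNIV K" for K
    by (rule integrable_mult_continuous_if_ess_bounded[OF V(1,2) that])
  have "continuous_on UNIV (\<lambda>y. \<alpha> * H (y / \<alpha>))"
    by (intro continuous_intros continuous_on_compose2[OF H_cont]) (use \<open>\<alpha> > 0\<close> in auto)
  note int_H = int[OF this]
  have "\<alpha> * (\<integral>x. (\<alpha> * V (\<alpha> * x)) * g x \<partial>lborel) = (\<integral>y. V y * (\<alpha> * H (y / \<alpha>)) \<partial>lborel)"
    using integral_scaled_potential[OF \<open>\<alpha> > 0\<close> _ borel_measurable_continuous_onI[OF H_cont] g]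
    by (simp add: ac_simps)
  moreover have "(\<lambda>y. V y * (y * H' 0)) = (\<lambda>y. H' 0 * (y * V y))"
    by (simp add: fun_eq_iff ac_simps)
  then have "H' 0 * (\<integral>x. x * V x \<partial>lborel) = (\<integral>y. V y * (y * H' 0) \<partial>lborel)"
    by (simp only: integral_mult_right_zero)
  moreover have "(\<integral>y. V y * (\<alpha> * H 0) \<partial>lborel) = 0"
    using V(3) by simp
  moreover have "(\<integral>y. V y * (\<alpha> * (H (y / \<alpha>) - H 0) - y * H' 0) \<partial>lborel)
      = (\<integral>y. V y * (\<alpha> * H (y / \<alpha>)) \<partial>lborel) - (\<integral>y. V y * (\<alpha> * H 0) \<partial>lborel)
        - (\<integral>y. V y * (y * H' 0) \<partial>lborel)"
    using int_H int[of "\<lambda>y. y * H' 0"] int[of "\<lambda>y. \<alpha> * H 0"]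
    by (simp add: right_diff_distrib continuous_intros)
  ultimately show ?thesis by simp
qed

lemma rescaled_increment_le:
  fixes H H' :: "real \<Rightarrow> real"
  assumes H: "\<And>x. (H has_real_derivative H' x) (at x)" and "\<alpha> > 0"
    and osc: "\<And>s. \<bar>s\<bar> \<le> \<bar>y\<bar> / \<alpha> \<Longrightarrow> \<bar>H' s - H' 0\<bar> \<le> \<omega>"
  shows "\<bar>\<alpha> * (H (y / \<alpha>) - H 0) - y * H' 0\<bar> \<le> \<bar>y\<bar> * \<omega>"
proof -
  obtain \<xi> where \<xi>: "\<bar>\<xi>\<bar> \<le> \<bar>y / \<alpha>\<bar>" "H (y / \<alpha>) - H 0 = y / \<alpha> * H' \<xi>"
    using MVT_at_0[OF H, of "y / \<alpha>"] by blast
  have "\<alpha> * (H (y / \<alpha>) - H 0) - y * H' 0 = y * (H' \<xi> - H' 0)"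
    using \<xi>(2) \<open>\<alpha> > 0\<close> by (simp add: right_diff_distrib)
  moreover have "\<bar>H' \<xi> - H' 0\<bar> \<le> \<omega>"
    using \<xi>(1) \<open>\<alpha> > 0\<close> by (intro osc) (simp add: abs_div)
  ultimately show ?thesis by (simp add: abs_mult mult_left_mono)
qed

lemma abs_integral_mult_le_if_bounded_on_support:
  fixes V E :: "real \<Rightarrow> real"
  assumes V: "ess_bounded V" "AE x in lborel. x \<notin> {-b<..<b} \<longrightarrow> V x = 0"
    and E: "continuous_on UNIV E" "\<And>y. \<bar>y\<bar> < b \<Longrightarrow> \<bar>E y\<bar> \<le> C"
  shows "\<bar>\<integral>y. V y * E y \<partial>lborel\<bar> \<le> (\<integral>y. \<bar>V y\<bar> \<partial>lborel) * C"
proof -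
  have "\<bar>\<integral>y. V y * E y \<partial>lborel\<bar> \<le> (\<integral>y. \<bar>V y * E y\<bar> \<partial>lborel)"
    by (rule integral_abs_bound)
  also have "\<dots> \<le> (\<integral>y. \<bar>V y\<bar> * C \<partial>lborel)"
  proof (rule integral_mono_AE)
    show "integrable lborel (\<lambda>y. \<bar>V y * E y\<bar>)"
      using integrable_mult_continuous_if_ess_bounded[OF V E(1)] by (rule integrable_abs)
    show "integrable lborel (\<lambda>y. \<bar>V y\<bar> * C)"
      using integrable_abs[OF integrable_mult_continuous_if_ess_bounded[OF V, of "\<lambda>_. 1"]] by simp
    show "AE y in lborel. \<bar>V y * E y\<bar> \<le> \<bar>V y\<bar> * C"
      using V(2)
    proof eventually_elim
      case (elim y)
      show ?case
      proof (cases "\<bar>y\<bar> < b")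
        case True
        then show ?thesis using E(2)[OF True] by (simp add: abs_mult mult_left_mono)
      qed (use elim in auto)
    qed
  qed
  also have "\<dots> = (\<integral>y. \<bar>V y\<bar> \<partial>lborel) * C"
    by simp
  finally show ?thesis .
qed

lemma scaled_potential_first_moment_error:
  fixes V g H H' :: "real \<Rightarrow> real"
  assumes V: "ess_bounded V" "AE x in lborel. x \<notin> {-b<..<b} \<longrightarrow> V x = 0" "(\<integral>x. V x \<partial>lborel) = 0"
    and H: "\<And>x. (H has_real_derivative H' x) (at x)"
    and g: "g \<in> borel_measurable lborel" "AE x in lborel. g x = H x"
    and "\<alpha> > 0" and osc: "\<And>s. \<bar>s\<bar> \<le> b / \<alpha> \<Longrightarrow> \<bar>H' s - H' 0\<bar> \<le> \<omega>"
  shows "\<bar>\<alpha> * (\<integral>x. (\<alpha> * V (\<alpha> * x)) * g x \<partial>lborel) - H' 0 * (\<integral>x. x * V x \<partial>lborel)\<bar>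
           \<le> (\<integral>y. \<bar>V y\<bar> \<partial>lborel) * (b * \<omega>)"
  unfolding scaled_potential_first_moment_eq[OF V H g \<open>\<alpha> > 0\<close>]
proof (rule abs_integral_mult_le_if_bounded_on_support[OF V(1,2)])
  have H_cont: "continuous_on UNIV H"
    by (meson H DERIV_continuous continuous_at_imp_continuous_on)
  show "continuous_on UNIV (\<lambda>y. \<alpha> * (H (y / \<alpha>) - H 0) - y * H' 0)"
    by (intro continuous_intros continuous_on_compose2[OF H_cont]) (use \<open>\<alpha> > 0\<close> in auto)
  fix y :: real
  assume "\<bar>y\<bar> < b"
  have "\<bar>\<alpha> * (H (y / \<alpha>) - H 0) - y * H' 0\<bar> \<le> \<bar>y\<bar> * \<omega>"
  proof (rule rescaled_increment_le[OF H \<open>\<alpha> > 0\<close>])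
    fix s assume "\<bar>s\<bar> \<le> \<bar>y\<bar> / \<alpha>"
    moreover have "\<bar>y\<bar> / \<alpha> \<le> b / \<alpha>" using \<open>\<bar>y\<bar> < b\<close> \<open>\<alpha> > 0\<close> by (simp add: divide_right_mono)
    ultimately show "\<bar>H' s - H' 0\<bar> \<le> \<omega>" by (intro osc) linarith
  qed
  moreover have "0 \<le> \<omega>" using osc[of 0] \<open>\<bar>y\<bar> < b\<close> \<open>\<alpha> > 0\<close> by simp
  ultimately show "\<bar>\<alpha> * (H (y / \<alpha>) - H 0) - y * H' 0\<bar> \<le> b * \<omega>"
    using \<open>\<bar>y\<bar> < b\<close> by (meson less_imp_le mult_right_mono order_trans)
qed

lemma scaled_potential_first_moment_error_local_L1:
  fixes V g H H' H'' :: "real \<Rightarrow> real"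
  assumes V: "ess_bounded V" "AE x in lborel. x \<notin> {-b<..<b} \<longrightarrow> V x = 0" "(\<integral>x. V x \<partial>lborel) = 0"
    and H: "\<And>x. (H has_real_derivative H' x) (at x)"
    and g: "g \<in> borel_measurable lborel" "AE x in lborel. g x = H x"
    and H'': "\<And>s t. s < t \<Longrightarrow> H' t - H' s = (\<integral>x. indicator {s<..t} x * H'' x \<partial>lborel)"
      "\<And>s t. set_integrable lborel {s..t} H''"
    and "\<alpha> > 0"
  shows "\<bar>\<alpha> * (\<integral>x. (\<alpha> * V (\<alpha> * x)) * g x \<partial>lborel) - H' 0 * (\<integral>x. x * V x \<partial>lborel)\<bar>
           \<le> (\<integral>y. \<bar>V y\<bar> \<partial>lborel) * (b * (\<integral>x. indicator {-(b / \<alpha>)..b / \<alpha>} x * \<bar>H'' x\<bar> \<partial>lborel))"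
  using H'' by (intro scaled_potential_first_moment_error[OF V H g \<open>\<alpha> > 0\<close>] increment_le_integral_Icc_abs)

lemma integral_Icc_abs_scaled_smallo:
  fixes h :: "real \<Rightarrow> real"
  assumes h: "h \<in> borel_measurable lborel" "\<And>a b. set_integrable lborel {a..b} h"
    "\<And>a b. set_integrable lborel {a..b} (\<lambda>x. (h x)\<^sup>2)"
    and "b > 0"
  shows "(\<lambda>\<alpha>. \<integral>x. indicator {-(b / \<alpha>)..b / \<alpha>} x * \<bar>h x\<bar> \<partial>lborel) \<in> o[at_top](\<lambda>\<alpha>. \<alpha> powr (-1/2))"
proof -
  have "filterlim (\<lambda>\<alpha>. b / \<alpha>) (at_right 0) at_top"
    using \<open>b > 0\<close> by real_asymp
  with integral_Icc_abs_smallo_sqrt[OF h]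
  have "(\<lambda>\<alpha>. \<integral>x. indicator {-(b / \<alpha>)..b / \<alpha>} x * \<bar>h x\<bar> \<partial>lborel) \<in> o[at_top](\<lambda>\<alpha>. sqrt (b / \<alpha>))"
    by (rule landau_o.small.compose)
  also have "(\<lambda>\<alpha>. sqrt (b / \<alpha>)) \<in> O[at_top](\<lambda>\<alpha>. \<alpha> powr (-1/2))"
    using \<open>b > 0\<close> by real_asymp
  finally show ?thesis .
qed

theorem proposition2:
  fixes V g g1 g2 :: "real \<Rightarrow> real" and b :: real
  assumes "ess_bounded V"
    and "b > 0"
    and "AE x in lborel. x \<notin> {-b<..<b} \<longrightarrow> V x = 0"
    and "(\<integral>x. V x \<partial>lborel) = 0"
    and "W22_loc_with g g1 g2"
    and "continuous_on UNIV g1"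
  shows "(\<lambda>\<alpha>. \<alpha> * (\<integral>x. (\<alpha> * V (\<alpha> * x)) * g x \<partial>lborel)
              - g1 0 * (\<integral>x. x * V x \<partial>lborel))
         \<in> o[at_top](\<lambda>\<alpha>. \<alpha> powr (-1/2))"
proof -
  have g: "g \<in> borel_measurable lborel" "weak_deriv g g1"
    and g2: "g2 \<in> borel_measurable lborel" "\<And>a b. set_integrable lborel {a..b} g2"
      "\<And>a b. set_integrable lborel {a..b} (\<lambda>x. (g2 x)\<^sup>2)" "weak_deriv g1 g2"
    using assms(5) unfolding W22_loc_with_def L2_loc_def weak_deriv_def by auto
  obtain H where H: "\<And>x. (H has_real_derivative g1 x) (at x)" "AE x in lborel. g x = H x"
    using weak_deriv_AE_eq_primitive[OF g(2) assms(6) g(1)] by blast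
  define N where "N = (\<integral>y. \<bar>V y\<bar> \<partial>lborel) * b"
  have "(\<lambda>\<alpha>. \<alpha> * (\<integral>x. (\<alpha> * V (\<alpha> * x)) * g x \<partial>lborel) - g1 0 * (\<integral>x. x * V x \<partial>lborel))
      \<in> O[at_top](\<lambda>\<alpha>. N * (\<integral>x. indicator {-(b / \<alpha>)..b / \<alpha>} x * \<bar>g2 x\<bar> \<partial>lborel))"
  proof (intro landau_o.big_mono eventually_mono[OF eventually_gt_at_top[of 0]])
    fix \<alpha> :: real assume "\<alpha> > 0"
    have "0 \<le> N" "0 \<le> (\<integral>x. indicator {-(b / \<alpha>)..b / \<alpha>} x * \<bar>g2 x\<bar> \<partial>lborel)"
      unfolding N_def using \<open>b > 0\<close> by (auto intro!: integral_nonneg_AE)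
    with scaled_potential_first_moment_error_local_L1[OF assms(1,3,4) H(1) g(1) H(2)
        weak_deriv_fundamental_theorem[OF g2(4) assms(6) g2(1)] g2(2) \<open>\<alpha> > 0\<close>]
    show "norm (\<alpha> * (\<integral>x. (\<alpha> * V (\<alpha> * x)) * g x \<partial>lborel) - g1 0 * (\<integral>x. x * V x \<partial>lborel))
        \<le> norm (N * (\<integral>x. indicator {-(b / \<alpha>)..b / \<alpha>} x * \<bar>g2 x\<bar> \<partial>lborel))"
      using \<open>b > 0\<close> by (simp add: N_def abs_mult mult.assoc)
  qed
  also have "(\<lambda>\<alpha>. N * (\<integral>x. indicator {-(b / \<alpha>)..b / \<alpha>} x * \<bar>g2 x\<bar> \<partial>lborel))
      \<in> O[at_top](\<lambda>\<alpha>. \<integral>x. indicator {-(b / \<alpha>)..b / \<alpha>} x * \<bar>g2 x\<bar> \<partial>lborel)"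
    by simp
  also have "(\<lambda>\<alpha>. \<integral>x. indicator {-(b / \<alpha>)..b / \<alpha>} x * \<bar>g2 x\<bar> \<partial>lborel) \<in> o[at_top](\<lambda>\<alpha>. \<alpha> powr (-1/2))"
    by (rule integral_Icc_abs_scaled_smallo[OF g2(1-3) \<open>b > 0\<close>])
  finally show ?thesis .
qed

end
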